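(* Let $N$ be an NFA, let $L_0$ be a forward-admissible initial partition of its vertex set, let $L$ be the partition output by the forward refinement algorithm started from $L_0$, and let $\sim$ be the equivalence relation whose classes are the sets of $L$. Then $\sim$ refines $\sim_{\mathrm{fwd}}$, i.e. $v\sim w$ implies $v\sim_{\mathrm{fwd}}w$.
   Context: An NFA $N$ over a finite alphabet $A$ consists of a finite vertex set $V$, a starting vertex $v_s\in V$, accepting action sets for the vertices, and a set of labeled edges $v\xrightarrow{\lambda}w$ with $v,w\in V$ and $\lambda\in A\cup\{\varepsilon\}$. For a vertex $u$ and a finite sequence $\tau=\tau_1\cdots\tau_r$ ($r\ge0$) with $\tau_i\in A\cup\{\varepsilon\}$, a vertex $w$ is reachable from $u$ on $\tau$ if there are vertices $u=v_1,\dots,v_{r+1}=w$ with an edge $v_i\xrightarrow{\tau_i}v_{i+1}$ for each $i$. Vertices $v_1,v_2$ are forward-equivalent, $v_1\sim_{\mathrm{fwd}}v_2$, if for every finite sequence $\tau$ over $A\cup\{\varepsilon\}$, $v_1$ is reachable from $v_s$ on $\tau$ iff $v_2$ is. A partition $L_0$ of $V$ is a forward-admissible initial partition if $\{v_s\}\in L_0$. Refining a partition $P$ of $V$ by a subset $Y\subseteq V$ means replacing $P$ by the nonempty sets among $\{B\cap Y, B\setminus Y : B\in P\}$. Forward refinement algorithm: given $L_i$, for each $Z\in L_i$ and each $\sigma\in A\cup\{\varepsilon\}$ let $Z[\sigma]=\{z\in V: z'\xrightarrow{\sigma}z\text{ for some }z'\in Z\}$; $L_{i+1}$ is obtained from $L_i$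 by refining successively by all these sets $Z[\sigma]$. Repeat until $L_{i+1}=L_i$ and output this converged partition $L$. *)

theory Defs
  imports Main
begin

text \<open>NFA labels: \<open>Some a\<close> is a letter a of the alphabet A, \<open>None\<close> is epsilon.
  Edges are triples (v, label, w).\<close>

definition is_partition :: "'v set \<Rightarrow> 'v set set \<Rightarrow> bool" where
  "is_partition V P \<longleftrightarrow> {} \<notin> P \<and> \<Union>P = V \<and>
     (\<forall>B\<in>P. \<forall>C\<in>P. B \<noteq> C \<longrightarrow> B \<inter> C = {})"

fun reach :: "('v \<times> 'a option \<times> 'v) set \<Rightarrow> 'v \<Rightarrow> 'a option list \<Rightarrow> 'v \<Rightarrow> bool" where
  "reach E u [] w \<longleftrightarrow> u = w"
| "reach E u (s # t) w \<longleftrightarrow> (\<exists>v. (u, s, v) \<in> E \<and> reach E v t w)"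

definition fwd_equiv ::
  "'a set \<Rightarrow> ('v \<times> 'a option \<times> 'v) set \<Rightarrow> 'v \<Rightarrow> 'v \<Rightarrow> 'v \<Rightarrow> bool" where
  "fwd_equiv A E vs v1 v2 \<longleftrightarrow>
     (\<forall>t. set t \<subseteq> insert None (Some ` A) \<longrightarrow> (reach E vs t v1 \<longleftrightarrow> reach E vs t v2))"

definition refine_by :: "'v set set \<Rightarrow> 'v set \<Rightarrow> 'v set set" where
  "refine_by P Y = ({B \<inter> Y | B. B \<in> P} \<union> {B - Y | B. B \<in> P}) - {{}}"

definition succ_set :: "('v \<times> 'a option \<times> 'v) set \<Rightarrow> 'v set \<Rightarrow> 'a option \<Rightarrow> 'v set" where
  "succ_set E Z s = {z. \<exists>z'\<in>Z. (z', s, z) \<in> E}"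

definition fwd_step ::
  "'a set \<Rightarrow> ('v \<times> 'a option \<times> 'v) set \<Rightarrow> 'v set set \<Rightarrow> 'v set set" where
  "fwd_step A E L = foldl refine_by L
     (SOME ys. set ys = {succ_set E Z s | Z s. Z \<in> L \<and> s \<in> insert None (Some ` A)})"

definition fwd_refine ::
  "'a set \<Rightarrow> ('v \<times> 'a option \<times> 'v) set \<Rightarrow> 'v set set \<Rightarrow> 'v set set" where
  "fwd_refine A E L0 =
     (fwd_step A E ^^ (LEAST k. fwd_step A E ((fwd_step A E ^^ k) L0) = (fwd_step A E ^^ k) L0)) L0"

end

theory Submission
  imports Defs
begin

text \<open>The output partition L is a fixpoint of one refinement round, so it is stable: every
  block lies inside or outside each set Z[\<sigma>] with Z \<in> L. Hence the successor set of a union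
  of blocks is again a union of blocks, and so, by induction on \<tau>, is the set of vertices
  reachable from {vs} on \<tau>, because {vs} is itself a block of L. Two vertices in one block
  are therefore reachable on exactly the same sequences. Termination of the algorithm, needed
  for L to be well defined, holds because each round refines the partition of the finite set V,
  and a non-trivial refinement strictly shrinks the induced equivalence relation.\<close>

abbreviation labels :: "'a set \<Rightarrow> 'a option set" where
  "labels A \<equiv> insert None (Some ` A)"

definition refines :: "'v set set \<Rightarrow> 'v set set \<Rightarrow> bool" where
  "refines Q P \<longleftrightarrow> (\<forall>C\<in>Q. \<exists>B\<in>P. C \<subseteq> B)"

lemma refines_refl: "refines P P"
  unfolding refines_def by blast

lemma refines_trans: "refines R Q \<Longrightarrow> refines Q P \<Longrightarrow> refines R P"
  unfolding refines_def by (meson order_trans)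

lemma partition_block_unique:
  "is_partition V P \<Longrightarrow> B \<in> P \<Longrightarrow> C \<in> P \<Longrightarrow> x \<in> B \<Longrightarrow> x \<in> C \<Longrightarrow> B = C"
  unfolding is_partition_def by blast

lemma partition_block_exists: "is_partition V P \<Longrightarrow> x \<in> V \<Longrightarrow> \<exists>B\<in>P. x \<in> B"
  unfolding is_partition_def by blast

lemma is_partition_finite:
  assumes "is_partition V P" "finite V"
  shows "finite P"
proof -
  have "P \<subseteq> Pow V" using assms(1) unfolding is_partition_def by blast
  then show ?thesis using assms(2) by (simp add: finite_subset)
qed

lemma singleton_block_refines:
  assumes "is_partition V L" "refines L L0" "is_partition V L0" "{v} \<in> L0" "v \<in> V"
  shows "{v} \<in> L"
proof -
  obtain B where B: "B \<in> L" "v \<in> B" using partition_block_exists[OF assms(1,5)] by blast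
  then obtain B0 where "B0 \<in> L0" "B \<subseteq> B0" using assms(2) unfolding refines_def by blast
  then have "B0 = {v}" using partition_block_unique[OF assms(3) _ assms(4)] B(2) by blast
  then show ?thesis using B \<open>B \<subseteq> B0\<close> by (metis subset_singletonD empty_iff)
qed

lemma refines_refine_by: "refines (refine_by P Y) P"
  unfolding refines_def refine_by_def by blast

lemma refine_by_splits: "C \<in> refine_by P Y \<Longrightarrow> C \<subseteq> Y \<or> C \<inter> Y = {}"
  unfolding refine_by_def by blast

lemma Union_refine_by: "\<Union>(refine_by P Y) = \<Union>P"
proof (intro equalityI subsetI)
  fix x assume "x \<in> \<Union>P"
  then obtain B where "B \<in> P" "x \<in> B" by blast
  then have "x \<in> B \<inter> Y \<or> x \<in> B - Y" by blast
  then show "x \<in> \<Union>(refine_by P Y)"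
    using \<open>B \<in> P\<close> unfolding refine_by_def by blast
qed (auto simp: refine_by_def)

lemma is_partition_refine_by:
  assumes "is_partition V P"
  shows "is_partition V (refine_by P Y)"
  unfolding is_partition_def
proof (intro conjI ballI impI)
  show "{} \<notin> refine_by P Y" unfolding refine_by_def by blast
  show "\<Union>(refine_by P Y) = V"
    using assms unfolding is_partition_def Union_refine_by by blast
next
  fix C D assume "C \<in> refine_by P Y" "D \<in> refine_by P Y" "C \<noteq> D"
  then obtain B B' where "B \<in> P" "B' \<in> P"
    and C: "C = B \<inter> Y \<or> C = B - Y" and D: "D = B' \<inter> Y \<or> D = B' - Y"
    unfolding refine_by_def by blast
  show "C \<inter> D = {}"
  proof (cases "B = B'")
    case True
    with C D \<open>C \<noteq> D\<close> show ?thesis by blast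
  next
    case False
    with \<open>B \<in> P\<close> \<open>B' \<in> P\<close> assms have "B \<inter> B' = {}"
      unfolding is_partition_def by blast
    with C D show ?thesis by blast
  qed
qed

lemma refines_foldl_refine_by: "refines (foldl refine_by P ys) P"
proof (induction ys arbitrary: P)
  case Nil
  then show ?case by (simp add: refines_refl)
next
  case (Cons y ys)
  show ?case using refines_trans[OF Cons.IH refines_refine_by] by simp
qed

lemma foldl_refine_by_splits:
  "Y \<in> set ys \<Longrightarrow> C \<in> foldl refine_by P ys \<Longrightarrow> C \<subseteq> Y \<or> C \<inter> Y = {}"
proof (induction ys arbitrary: P)
  case Nil
  then show ?case by simp
next
  case (Cons y ys)
  show ?case
  proof (cases "Y \<in> set ys")
    case True
    with Cons show ?thesis by simp
  next
    case False
    with Cons.prems have "Y = y" by simp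
    have "refines (foldl refine_by (refine_by P y) ys) (refine_by P y)"
      by (rule refines_foldl_refine_by)
    then obtain B where "B \<in> refine_by P y" "C \<subseteq> B"
      using Cons.prems(2) unfolding refines_def by auto
    with \<open>Y = y\<close> show ?thesis using refine_by_splits by blast
  qed
qed

lemma is_partition_foldl_refine_by:
  "is_partition V P \<Longrightarrow> is_partition V (foldl refine_by P ys)"
  by (induction ys arbitrary: P) (simp_all add: is_partition_refine_by)

definition block_rel :: "'v set set \<Rightarrow> 'v rel" where
  "block_rel P = {(x, y). \<exists>B\<in>P. x \<in> B \<and> y \<in> B}"

lemma block_rel_mono:
  assumes "refines Q P"
  shows "block_rel Q \<subseteq> block_rel P"
proof (clarsimp simp: block_rel_def)
  fix x y C assume "C \<in> Q" "x \<in> C" "y \<in> C"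
  with assms show "\<exists>B\<in>P. x \<in> B \<and> y \<in> B"
    unfolding refines_def by (meson subsetD)
qed

lemma block_rel_subset: "block_rel P \<subseteq> \<Union>P \<times> \<Union>P"
  unfolding block_rel_def by blast

lemma block_rel_Image:
  assumes "is_partition V P" "B \<in> P" "x \<in> B"
  shows "block_rel P `` {x} = B"
proof
  show "block_rel P `` {x} \<subseteq> B"
  proof
    fix y assume "y \<in> block_rel P `` {x}"
    then obtain C where "C \<in> P" "x \<in> C" "y \<in> C" unfolding block_rel_def by auto
    with partition_block_unique[OF assms(1,2)] assms(3) show "y \<in> B" by blast
  qed
  show "B \<subseteq> block_rel P `` {x}"
    using assms(2,3) unfolding block_rel_def by auto
qed

lemma quotient_block_rel:
  assumes "is_partition V P"
  shows "V // block_rel P = P"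
proof (intro equalityI subsetI)
  fix X assume "X \<in> V // block_rel P"
  then obtain x where "x \<in> V" "X = block_rel P `` {x}" by (rule quotientE)
  moreover obtain B where "B \<in> P" "x \<in> B"
    using partition_block_exists[OF assms \<open>x \<in> V\<close>] by blast
  ultimately show "X \<in> P" using block_rel_Image[OF assms] by simp
next
  fix B assume "B \<in> P"
  then obtain x where "x \<in> B" using assms unfolding is_partition_def by (metis ex_in_conv)
  then have "x \<in> V" using assms \<open>B \<in> P\<close> unfolding is_partition_def by (metis UnionI)
  then have "block_rel P `` {x} \<in> V // block_rel P" by (rule quotientI)
  then show "B \<in> V // block_rel P" using block_rel_Image[OF assms \<open>B \<in> P\<close> \<open>x \<in> B\<close>] by simp
qed

lemma refining_sequence_stabilizes:
  assumes "finite V" and part: "\<And>k. is_partition V (P k)"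
    and ref: "\<And>k. refines (P (Suc k)) (P k)"
  shows "\<exists>k. P (Suc k) = P k"
proof -
  obtain k where k: "(block_rel (P (Suc k)), block_rel (P k)) \<notin> finite_psubset"
    using wf_no_infinite_down_chainE[OF wf_finite_psubset, of "\<lambda>k. block_rel (P k)"] by auto
  have "block_rel (P k) \<subseteq> V \<times> V"
    using block_rel_subset[of "P k"] part[of k] unfolding is_partition_def by simp
  then have "finite (block_rel (P k))"
    using \<open>finite V\<close> by (simp add: finite_subset)
  with k block_rel_mono[OF ref] have "block_rel (P (Suc k)) = block_rel (P k)"
    unfolding finite_psubset_def by auto
  then have "V // block_rel (P (Suc k)) = V // block_rel (P k)" by simp
  then show ?thesis using quotient_block_rel[OF part] by auto
qed

lemma refines_fwd_step: "refines (fwd_step A E L) L"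
  unfolding fwd_step_def by (rule refines_foldl_refine_by)

lemma is_partition_fwd_step: "is_partition V L \<Longrightarrow> is_partition V (fwd_step A E L)"
  unfolding fwd_step_def by (rule is_partition_foldl_refine_by)

lemma is_partition_fwd_step_iterate:
  "is_partition V L0 \<Longrightarrow> is_partition V ((fwd_step A E ^^ k) L0)"
  by (induction k) (simp_all add: is_partition_fwd_step)

lemma refines_fwd_step_iterate: "refines ((fwd_step A E ^^ k) L0) L0"
proof (induction k)
  case 0
  then show ?case by (simp add: refines_refl)
next
  case (Suc k)
  then show ?case using refines_trans[OF refines_fwd_step] by simp
qed

lemma is_partition_fwd_refine: "is_partition V L0 \<Longrightarrow> is_partition V (fwd_refine A E L0)"
  unfolding fwd_refine_def by (rule is_partition_fwd_step_iterate)

lemma refines_fwd_refine: "refines (fwd_refine A E L0) L0"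
  unfolding fwd_refine_def by (rule refines_fwd_step_iterate)

lemma fwd_step_fwd_refine:
  assumes "finite V" "is_partition V L0"
  shows "fwd_step A E (fwd_refine A E L0) = fwd_refine A E L0"
proof -
  let ?P = "\<lambda>k. (fwd_step A E ^^ k) L0"
  have "\<exists>k. ?P (Suc k) = ?P k"
  proof (rule refining_sequence_stabilizes[OF assms(1)])
    show "is_partition V (?P k)" for k
      using assms(2) by (rule is_partition_fwd_step_iterate)
    show "refines (?P (Suc k)) (?P k)" for k
      by (simp add: refines_fwd_step)
  qed
  then have "\<exists>k. fwd_step A E (?P k) = ?P k" by simp
  then show ?thesis
    unfolding fwd_refine_def by (rule LeastI_ex)
qed

definition stable :: "'a set \<Rightarrow> ('v \<times> 'a option \<times> 'v) set \<Rightarrow> 'v set set \<Rightarrow> bool" where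
  "stable A E L \<longleftrightarrow>
     (\<forall>B\<in>L. \<forall>Z\<in>L. \<forall>s\<in>labels A. B \<subseteq> succ_set E Z s \<or> B \<inter> succ_set E Z s = {})"

lemma fwd_step_fixpoint_stable:
  assumes "fwd_step A E L = L" "finite L" "finite A"
  shows "stable A E L"
  unfolding stable_def
proof (intro ballI)
  fix B Z s assume "B \<in> L" "Z \<in> L" "s \<in> labels A"
  let ?S = "{succ_set E Z s | Z s. Z \<in> L \<and> s \<in> labels A}"
  have "?S = (\<lambda>(Z, s). succ_set E Z s) ` (L \<times> labels A)" by auto
  \<comment> \<open>only for finitely many splitters does the SOME in fwd_step pick an actual enumeration\<close>
  then have "\<exists>ys. set ys = ?S" using assms(2,3) by (simp add: finite_list)
  then have "set (SOME ys. set ys = ?S) = ?S" by (rule someI_ex)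
  then have "succ_set E Z s \<in> set (SOME ys. set ys = ?S)"
    using \<open>Z \<in> L\<close> \<open>s \<in> labels A\<close> by blast
  moreover have "B \<in> foldl refine_by L (SOME ys. set ys = ?S)"
    using assms(1) \<open>B \<in> L\<close> unfolding fwd_step_def by simp
  ultimately show "B \<subseteq> succ_set E Z s \<or> B \<inter> succ_set E Z s = {}"
    by (rule foldl_refine_by_splits)
qed

definition saturated :: "'v set set \<Rightarrow> 'v set \<Rightarrow> bool" where
  "saturated L X \<longleftrightarrow> (\<forall>B\<in>L. B \<inter> X \<noteq> {} \<longrightarrow> B \<subseteq> X)"

lemma saturated_succ_set:
  assumes "is_partition V L" "stable A E L" "E \<subseteq> V \<times> UNIV"
    and "saturated L X" "s \<in> labels A"
  shows "saturated L (succ_set E X s)"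
  unfolding saturated_def
proof (intro ballI impI)
  fix B assume B: "B \<in> L" "B \<inter> succ_set E X s \<noteq> {}"
  then obtain z z' where z: "z \<in> B" "z' \<in> X" "(z', s, z) \<in> E"
    unfolding succ_set_def by blast
  then obtain Z where Z: "Z \<in> L" "z' \<in> Z"
    using partition_block_exists[OF assms(1)] assms(3) by blast
  then have "Z \<subseteq> X" using assms(4) z(2) unfolding saturated_def by blast
  have "B \<subseteq> succ_set E Z s"
    using assms(2,5) B(1) Z z unfolding stable_def succ_set_def by blast
  also have "\<dots> \<subseteq> succ_set E X s" using \<open>Z \<subseteq> X\<close> unfolding succ_set_def by blast
  finally show "B \<subseteq> succ_set E X s" .
qed

lemma saturated_reach:
  assumes "is_partition V L" "stable A E L" "E \<subseteq> V \<times> UNIV"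
  shows "saturated L X \<Longrightarrow> set t \<subseteq> labels A \<Longrightarrow> saturated L {w. \<exists>u\<in>X. reach E u t w}"
proof (induction t arbitrary: X)
  case Nil
  then show ?case by simp
next
  case (Cons s t)
  have "{w. \<exists>u\<in>X. reach E u (s # t) w} = {w. \<exists>u\<in>succ_set E X s. reach E u t w}"
    unfolding succ_set_def by auto
  then show ?case using Cons saturated_succ_set[OF assms] by simp
qed

lemma stable_block_fwd_equiv:
  assumes "is_partition V L" "stable A E L" "E \<subseteq> V \<times> UNIV" "{vs} \<in> L"
    and "B \<in> L" "v \<in> B" "w \<in> B"
  shows "fwd_equiv A E vs v w"
  unfolding fwd_equiv_def
proof (intro allI impI)
  fix t assume "set t \<subseteq> labels A"
  have "saturated L {vs}"
    unfolding saturated_def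
  proof (intro ballI impI)
    fix C assume "C \<in> L" "C \<inter> {vs} \<noteq> {}"
    then have "vs \<in> C" by blast
    with partition_block_unique[OF assms(1) \<open>C \<in> L\<close> assms(4)] show "C \<subseteq> {vs}" by simp
  qed
  then have "saturated L {x. \<exists>u\<in>{vs}. reach E u t x}"
    using \<open>set t \<subseteq> labels A\<close> by (rule saturated_reach[OF assms(1-3)])
  then have "B \<inter> {x. reach E vs t x} \<noteq> {} \<longrightarrow> B \<subseteq> {x. reach E vs t x}"
    using assms(5) unfolding saturated_def by simp
  with assms(6,7) show "reach E vs t v \<longleftrightarrow> reach E vs t w" by blast
qed

theorem mainTheorem7:
  fixes V :: "'v set" and A :: "'a set" and vs :: 'v
    and E :: "('v \<times> 'a option \<times> 'v) set" and L0 :: "'v set set"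
  assumes "finite V" and "finite A" and "vs \<in> V"
    and "E \<subseteq> V \<times> insert None (Some ` A) \<times> V"
    and "is_partition V L0" and "{vs} \<in> L0"
  shows "\<forall>v w. (\<exists>B\<in>fwd_refine A E L0. v \<in> B \<and> w \<in> B) \<longrightarrow> fwd_equiv A E vs v w"
proof (intro allI impI)
  fix v w assume "\<exists>B\<in>fwd_refine A E L0. v \<in> B \<and> w \<in> B"
  then obtain B where B: "B \<in> fwd_refine A E L0" "v \<in> B" "w \<in> B" by blast
  have part: "is_partition V (fwd_refine A E L0)"
    using assms(5) by (rule is_partition_fwd_refine)
  have "stable A E (fwd_refine A E L0)"
    using fwd_step_fwd_refine[OF assms(1,5)] is_partition_finite[OF part assms(1)] assms(2)
    by (rule fwd_step_fixpoint_stable)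
  moreover have "E \<subseteq> V \<times> UNIV" using assms(4) by blast
  moreover have "{vs} \<in> fwd_refine A E L0"
    using part refines_fwd_refine assms(5,6,3) by (rule singleton_block_refines)
  ultimately show "fwd_equiv A E vs v w"
    using stable_block_fwd_equiv[OF part] B by blast
qed

end
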